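(* Let $T_0$ be a closed, symmetric operator with dense domain in a Hilbert space $\mathcal{H}$, and suppose $T_0$ has a self-adjoint extension $T$ (with domain in $\mathcal{H}$) that has a bounded inverse $T^{-1}$ defined on all of $\mathcal{H}$. Let $X := T(T - iI)^{-1} = (I - iT^{-1})^{-1}$. Then $X$ restricts to a bijection from $(\mathrm{Ran}\, T_0)^\perp$ onto $(\mathrm{Ran}(T_0 + iI))^\perp$. In particular, $n := \dim (\mathrm{Ran}\, T_0)^\perp = \dim(\mathrm{Ran}(T_0 + iI))^\perp$, and $T_0$ has equal deficiency indices $(n,n)$.
   Context: The deficiency indices of a closed symmetric operator $T_0$ are $(n_+,n_-)$ with $n_\pm = \dim(\mathrm{Ran}(T_0 \pm iI))^\perp \in \{0,1,2,\dots\}\cup\{+\infty\}$. *)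

theory Defs
  imports "HOL-Analysis.Analysis" "HOL-Library.Extended_Nat"
begin

class complex_vector = real_vector +
  fixes scaleC :: "complex \<Rightarrow> 'a \<Rightarrow> 'a" (infixr "*\<^sub>C" 75)
  assumes scaleC_add_right: "a *\<^sub>C (x + y) = a *\<^sub>C x + a *\<^sub>C y"
    and scaleC_add_left: "(a + b) *\<^sub>C x = a *\<^sub>C x + b *\<^sub>C x"
    and scaleC_scaleC: "a *\<^sub>C (b *\<^sub>C x) = (a * b) *\<^sub>C x"
    and scaleC_one: "1 *\<^sub>C x = x"
    and scaleR_scaleC: "scaleR r = scaleC (complex_of_real r)"

class chilbert_space = complex_vector + real_normed_vector + complete_space +
  fixes cinner :: "'a \<Rightarrow> 'a \<Rightarrow> complex"
  assumes cinner_commute: "cinner x y = cnj (cinner y x)"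
    and cinner_add_left: "cinner (x + y) z = cinner x z + cinner y z"
    and cinner_scaleC_left: "cinner (r *\<^sub>C x) y = cnj r * cinner x y"
    and cinner_self_real: "Im (cinner x x) = 0"
    and cinner_self_nonneg: "0 \<le> Re (cinner x x)"
    and cinner_self_eq_zero: "cinner x x = 0 \<longleftrightarrow> x = 0"
    and norm_eq_sqrt_cinner: "norm x = sqrt (Re (cinner x x))"

definition csubspace :: "'a::complex_vector set \<Rightarrow> bool" where
  "csubspace S \<longleftrightarrow> 0 \<in> S \<and> (\<forall>x\<in>S. \<forall>y\<in>S. x + y \<in> S) \<and> (\<forall>c. \<forall>x\<in>S. c *\<^sub>C x \<in> S)"

definition cindependent :: "'a::complex_vector set \<Rightarrow> bool" where
  "cindependent B \<longleftrightarrow> (\<forall>F c. finite F \<longrightarrow> F \<subseteq> B \<longrightarrow> (\<Sum>v\<in>F. c v *\<^sub>C v) = 0 \<longrightarrow> (\<forall>v\<in>F. c v = 0))"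

definition cdim :: "'a::complex_vector set \<Rightarrow> enat" where
  "cdim S = (SUP B\<in>{B. finite B \<and> B \<subseteq> S \<and> cindependent B}. enat (card B))"

definition orth :: "'a::chilbert_space set \<Rightarrow> 'a set" where
  "orth A = {y. \<forall>x\<in>A. cinner x y = 0}"

definition lin_op :: "'a::complex_vector set \<Rightarrow> ('a \<Rightarrow> 'a) \<Rightarrow> bool" where
  "lin_op D T \<longleftrightarrow> csubspace D \<and> (\<forall>x\<in>D. \<forall>y\<in>D. T (x + y) = T x + T y)
     \<and> (\<forall>c. \<forall>x\<in>D. T (c *\<^sub>C x) = c *\<^sub>C T x)"

definition densely_defined :: "'a::chilbert_space set \<Rightarrow> bool" where
  "densely_defined D \<longleftrightarrow> closure D = UNIV"

definition closed_op :: "'a::chilbert_space set \<Rightarrow> ('a \<Rightarrow> 'a) \<Rightarrow> bool" where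
  "closed_op D T \<longleftrightarrow> closed {(x, T x) | x. x \<in> D}"

definition symmetric_op :: "'a::chilbert_space set \<Rightarrow> ('a \<Rightarrow> 'a) \<Rightarrow> bool" where
  "symmetric_op D T \<longleftrightarrow> (\<forall>x\<in>D. \<forall>y\<in>D. cinner (T x) y = cinner x (T y))"

definition adj_dom :: "'a::chilbert_space set \<Rightarrow> ('a \<Rightarrow> 'a) \<Rightarrow> 'a set" where
  "adj_dom D T = {y. \<exists>z. \<forall>x\<in>D. cinner (T x) y = cinner x z}"

definition self_adjoint_op :: "'a::chilbert_space set \<Rightarrow> ('a \<Rightarrow> 'a) \<Rightarrow> bool" where
  "self_adjoint_op D T \<longleftrightarrow> lin_op D T \<and> densely_defined D \<and> adj_dom D T = D
     \<and> (\<forall>x\<in>D. \<forall>y\<in>D. cinner (T x) y = cinner x (T y))"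

definition extends_op :: "'a set \<Rightarrow> ('a \<Rightarrow> 'a) \<Rightarrow> 'a set \<Rightarrow> ('a \<Rightarrow> 'a) \<Rightarrow> bool" where
  "extends_op D T D0 T0 \<longleftrightarrow> D0 \<subseteq> D \<and> (\<forall>x\<in>D0. T x = T0 x)"

definition bounded_clinear :: "('a::chilbert_space \<Rightarrow> 'a) \<Rightarrow> bool" where
  "bounded_clinear S \<longleftrightarrow> lin_op UNIV S \<and> (\<exists>K. \<forall>x. norm (S x) \<le> K * norm x)"

definition is_inverse_op :: "'a set \<Rightarrow> ('a \<Rightarrow> 'a) \<Rightarrow> ('a \<Rightarrow> 'a) \<Rightarrow> bool" where
  "is_inverse_op D T S \<longleftrightarrow> (\<forall>x. S x \<in> D \<and> T (S x) = x) \<and> (\<forall>x\<in>D. S (T x) = x)"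

end

theory Submission
  imports Defs
begin

text \<open>Write \<open>S = T\<inverse>\<close>, a bounded hermitian operator on the whole space. For \<open>x \<in> Dom T\<^sub>0\<close> we
have \<open>\<langle>T\<^sub>0 x, S z\<rangle> = \<langle>x, z\<rangle>\<close>, hence \<open>\<langle>T\<^sub>0 x, (I - c S) z\<rangle> = \<langle>(T\<^sub>0 - c\<^sup>* I) x, z\<rangle>\<close>: the map
\<open>I - c S\<close> carries \<open>(Ran (T\<^sub>0 - c\<^sup>* I))\<^sup>\<bottom>\<close> onto \<open>(Ran T\<^sub>0)\<^sup>\<bottom>\<close> whenever it is bijective. For
\<open>c = \<plusminus>i\<close> it is: injective because \<open>\<langle>x, S x\<rangle>\<close> is real, and surjective because
\<open>(I - c S) (I + c S) = I + S\<^sup>2\<close> is bounded and coercive, hence onto by the Banach fixed point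
theorem applied to \<open>x \<mapsto> x - \<lambda> ((I + S\<^sup>2) x - w)\<close> for small \<open>\<lambda> > 0\<close>. Since \<open>X = (I - i S)\<inverse>\<close>
and linear bijections preserve dimension, the theorem follows.\<close>

interpretation complex_vector: vector_space "scaleC :: complex \<Rightarrow> 'a \<Rightarrow> 'a::complex_vector"
  by unfold_locales (simp_all add: scaleC_add_right scaleC_add_left scaleC_scaleC scaleC_one)

interpretation complex_vector: vector_space_pair "scaleC :: complex \<Rightarrow> 'a \<Rightarrow> 'a::complex_vector"
  "scaleC :: complex \<Rightarrow> 'b \<Rightarrow> 'b::complex_vector" ..

abbreviation clinear :: "('a::complex_vector \<Rightarrow> 'b::complex_vector) \<Rightarrow> bool" where
  "clinear \<equiv> Vector_Spaces.linear scaleC scaleC"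

lemma clinear_iff:
  "clinear f \<longleftrightarrow> (\<forall>x y. f (x + y) = f x + f y) \<and> (\<forall>c x. f (c *\<^sub>C x) = c *\<^sub>C f x)"
  by (simp add: Vector_Spaces.linear_iff complex_vector.vector_space_axioms)

lemma bounded_clinear_iff:
  "bounded_clinear S \<longleftrightarrow> clinear S \<and> (\<exists>K. \<forall>x. norm (S x) \<le> K * norm x)"
  by (simp add: bounded_clinear_def lin_op_def csubspace_def clinear_iff)

lemma cindependent_iff_independent: "cindependent B \<longleftrightarrow> complex_vector.independent B"
  unfolding cindependent_def complex_vector.independent_explicit_finite_subsets by blast

lemma cdim_le_cdim_inj_image:
  assumes "clinear f" and "inj f"
  shows "cdim A \<le> cdim (f ` A)"
  unfolding cdim_def
proof (rule SUP_least)
  fix B assume "B \<in> {B. finite B \<and> B \<subseteq> A \<and> cindependent B}"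
  then have B: "finite B" "B \<subseteq> A" "complex_vector.independent B"
    by (simp_all add: cindependent_iff_independent)
  have "inj_on f (complex_vector.span B)"
    using assms(2) by (rule inj_on_subset) simp
  then have "cindependent (f ` B)"
    unfolding cindependent_iff_independent
    by (rule complex_vector.linear_independent_injective_image[OF assms(1) B(3)])
  then have "f ` B \<in> {B. finite B \<and> B \<subseteq> f ` A \<and> cindependent B}"
    using B(1,2) by blast
  moreover have "card (f ` B) = card B"
    using assms(2) by (rule card_image[OF inj_on_subset]) simp
  ultimately show "enat (card B) \<le> (SUP B\<in>{B. finite B \<and> B \<subseteq> f ` A \<and> cindependent B}. enat (card B))"
    by (intro SUP_upper2[of "f ` B"]) simp_all
qed

lemma cdim_bij_image:
  assumes "clinear f" and "bij f"
  shows "cdim (f ` A) = cdim A"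
proof (rule antisym)
  have "module_hom scaleC scaleC (inv f)"
    using assms by (intro complex_vector.bij_module_hom_imp_inv_module_hom) (simp_all add: module_hom_iff_linear)
  then have "clinear (inv f)"
    by (simp add: module_hom_iff_linear)
  then have "cdim (f ` A) \<le> cdim (inv f ` f ` A)"
    using assms(2) by (intro cdim_le_cdim_inj_image) (simp_all add: bij_imp_bij_inv bij_is_inj)
  also have "inv f ` f ` A = A"
    using assms(2) by (simp add: image_image bij_is_inj)
  finally show "cdim (f ` A) \<le> cdim A" .
  show "cdim A \<le> cdim (f ` A)"
    using assms by (simp add: cdim_le_cdim_inj_image bij_is_inj)
qed

lemma cinner_add_right: "cinner x (y + z) = cinner x y + cinner x z"
  by (subst (1 2 3) cinner_commute) (simp add: cinner_add_left)

lemma cinner_scaleC_right: "cinner x (c *\<^sub>C y) = c * cinner x y"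
  by (subst (1 2) cinner_commute) (simp add: cinner_scaleC_left)

lemma cinner_diff_left: "cinner (x - y) z = cinner x z - cinner y z"
  using cinner_add_left[of "x - y" y z] by simp

lemma cinner_diff_right: "cinner x (y - z) = cinner x y - cinner x z"
  using cinner_add_right[of x "y - z" z] by simp

lemma cinner_zero_left [simp]: "cinner 0 y = 0"
  using cinner_add_left[of 0 0 y] by simp

lemma cinner_zero_right [simp]: "cinner x 0 = 0"
  using cinner_add_right[of x 0 0] by simp

lemma cinner_minus_left: "cinner (- x) y = - cinner x y"
  using cinner_diff_left[of 0 x y] by simp

lemma cinner_minus_right: "cinner x (- y) = - cinner x y"
  using cinner_diff_right[of x 0 y] by simp

lemma cinner_scaleR_right: "cinner x (r *\<^sub>R y) = complex_of_real r * cinner x y"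
  by (simp add: scaleR_scaleC cinner_scaleC_right)

lemma power2_norm_eq_Re_cinner: "(norm x)\<^sup>2 = Re (cinner x x)"
  by (simp add: norm_eq_sqrt_cinner cinner_self_nonneg)

lemma power2_norm_diff:
  "(norm (x - y))\<^sup>2 = (norm x)\<^sup>2 - 2 * Re (cinner x y) + (norm y)\<^sup>2"
proof -
  have "Re (cinner y x) = Re (cinner x y)"
    by (subst cinner_commute) simp
  then show ?thesis
    by (simp add: power2_norm_eq_Re_cinner cinner_diff_left cinner_diff_right)
qed

lemma coercive_contraction:
  fixes A :: "'a::chilbert_space \<Rightarrow> 'a"
  assumes bound: "norm (A d) \<le> C * norm d" and coercive: "(norm d)\<^sup>2 \<le> Re (cinner d (A d))"
    and l: "0 \<le> l" "l \<le> 1" "l * C\<^sup>2 \<le> 1"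
  shows "norm (d - l *\<^sub>R A d) \<le> sqrt (1 - l) * norm d"
proof -
  have "(norm (l *\<^sub>R A d))\<^sup>2 \<le> l\<^sup>2 * (C * norm d)\<^sup>2"
    using l(1) power_mono[OF bound] by (simp add: power_mult_distrib mult_left_mono)
  also have "\<dots> = l * (l * C\<^sup>2) * (norm d)\<^sup>2"
    by (simp add: power2_eq_square)
  also have "\<dots> \<le> l * 1 * (norm d)\<^sup>2"
    using l by (intro mult_right_mono mult_left_mono) simp_all
  finally have "(norm (d - l *\<^sub>R A d))\<^sup>2 \<le> (norm d)\<^sup>2 - 2 * l * Re (cinner d (A d)) + l * (norm d)\<^sup>2"
    by (simp add: power2_norm_diff cinner_scaleR_right)
  also have "\<dots> \<le> (1 - l) * (norm d)\<^sup>2"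
    using l(1) coercive by (simp add: algebra_simps mult_left_mono)
  also have "\<dots> = (sqrt (1 - l) * norm d)\<^sup>2"
    using l(2) by (simp add: power_mult_distrib)
  finally show ?thesis
    by (rule power2_le_imp_le) (use l(2) in simp)
qed

lemma coercive_surj:
  fixes A :: "'a::chilbert_space \<Rightarrow> 'a"
  assumes "clinear A" and bound: "\<And>x. norm (A x) \<le> C * norm x"
    and coercive: "\<And>x. (norm x)\<^sup>2 \<le> Re (cinner x (A x))"
  shows "surj A"
proof -
  define l where "l = 1 / (max C 1)\<^sup>2"
  have l: "0 < l" "l \<le> 1" "l * (max C 1)\<^sup>2 = 1"
    unfolding l_def by (auto simp: field_simps power_le_one_iff)
  have "w \<in> range A" for w
  proof -
    define G where "G x = x - l *\<^sub>R (A x - w)" for x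
    have "dist (G x) (G y) \<le> sqrt (1 - l) * dist x y" for x y
    proof -
      have "G x - G y = (x - y) - l *\<^sub>R (A x - A y)"
        by (simp add: G_def algebra_simps)
      also have "\<dots> = (x - y) - l *\<^sub>R A (x - y)"
        by (simp add: complex_vector.linear_diff[OF assms(1)])
      finally have "G x - G y = (x - y) - l *\<^sub>R A (x - y)" .
      moreover have "norm (A d) \<le> max C 1 * norm d" for d
        by (rule order_trans[OF bound]) (simp add: mult_right_mono)
      ultimately show ?thesis
        using coercive_contraction[of A _ "max C 1" l] l coercive by (simp add: dist_norm)
    qed
    then obtain x where "G x = x"
      using banach_fix_type[of "sqrt (1 - l)" G] l by auto
    then have "A x = w"
      using l(1) by (simp add: G_def)
    then show ?thesis by blast
  qed
  then show ?thesis by blast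
qed

lemma hermitian_cinner_self_real:
  assumes "\<And>u v. cinner (S u) v = cinner u (S v)"
  shows "Im (cinner x (S x)) = 0"
proof -
  have "cinner x (S x) = cnj (cinner x (S x))"
    by (metis assms cinner_commute)
  then show ?thesis
    by (metis Reals_cnj_iff complex_is_Real_iff)
qed

lemma clinear_id_minus_scaleC:
  assumes "clinear S"
  shows "clinear (\<lambda>x. x - c *\<^sub>C S x)"
  by (intro complex_vector.linear_compose_sub complex_vector.module_hom_ident
      complex_vector.linear_compose_scale_right assms)

lemma hermitian_inj_id_minus_i:
  assumes "clinear S" and "\<And>u v. cinner (S u) v = cinner u (S v)"
  shows "inj (\<lambda>x. x - \<i> *\<^sub>C S x)"
proof -
  have "x = 0" if "x - \<i> *\<^sub>C S x = 0" for x
  proof -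
    have "x = \<i> *\<^sub>C S x"
      using that by (simp only: right_minus_eq)
    then have "cinner x x = cinner x (\<i> *\<^sub>C S x)"
      by (rule arg_cong)
    also have "\<dots> = \<i> * cinner x (S x)"
      by (rule cinner_scaleC_right)
    finally have "Re (cinner x x) = 0"
      using hermitian_cinner_self_real[OF assms(2)] by simp
    then have "norm x = 0"
      by (simp add: norm_eq_sqrt_cinner)
    then show "x = 0"
      by simp
  qed
  then show ?thesis
    using clinear_id_minus_scaleC[OF assms(1)] by (simp add: complex_vector.linear_inj_iff_eq_0)
qed

lemma hermitian_surj_id_minus_i:
  assumes "clinear S" and bound: "\<And>x. norm (S x) \<le> K * norm x"
    and hermitian: "\<And>u v. cinner (S u) v = cinner u (S v)"
  shows "surj (\<lambda>x. x - \<i> *\<^sub>C S x)"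
proof -
  have S_add: "S (x + y) = S x + S y" and S_scale: "S (c *\<^sub>C x) = c *\<^sub>C S x" for x y c
    using assms(1) by (simp_all add: clinear_iff)
  define A where "A x = x + S (S x)" for x
  have "clinear A"
    using assms(1) unfolding A_def[abs_def]
    by (intro complex_vector.linear_compose_add complex_vector.module_hom_ident
        Vector_Spaces.linear_compose[OF assms(1), unfolded comp_def])
  moreover have "norm (A x) \<le> (1 + K\<^sup>2) * norm x" for x
  proof -
    have abs_bound: "norm (S y) \<le> \<bar>K\<bar> * norm y" for y
      by (rule order_trans[OF bound]) (simp add: mult_right_mono)
    have "norm (A x) \<le> norm x + norm (S (S x))"
      unfolding A_def by (rule norm_triangle_ineq)
    also have "norm (S (S x)) \<le> \<bar>K\<bar> * (\<bar>K\<bar> * norm x)"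
      using abs_bound[of "S x"] mult_left_mono[OF abs_bound[of x], of "\<bar>K\<bar>"] by simp
    finally show ?thesis
      by (simp add: algebra_simps power2_eq_square)
  qed
  moreover have "(norm x)\<^sup>2 \<le> Re (cinner x (A x))" for x
  proof -
    have "Re (cinner x (A x)) = (norm x)\<^sup>2 + (norm (S x))\<^sup>2"
      by (simp add: A_def cinner_add_right power2_norm_eq_Re_cinner flip: hermitian)
    then show ?thesis
      by simp
  qed
  ultimately have "surj A"
    by (rule coercive_surj)
  moreover have "A x = (x + \<i> *\<^sub>C S x) - \<i> *\<^sub>C S (x + \<i> *\<^sub>C S x)" for x
    by (simp add: A_def S_add S_scale scaleC_add_right scaleC_scaleC)
  ultimately show ?thesis
    by (metis surj_def)
qed

lemma hermitian_bij_id_minus_scaleC: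
  assumes "clinear S" and "\<And>x. norm (S x) \<le> K * norm x"
    and "\<And>u v. cinner (S u) v = cinner u (S v)"
    and "c = \<i> \<or> c = - \<i>"
  shows "bij (\<lambda>x. x - c *\<^sub>C S x)"
  using assms(4)
proof
  assume "c = \<i>"
  then show ?thesis
    unfolding bij_def using hermitian_inj_id_minus_i hermitian_surj_id_minus_i assms(1-3) by blast
next
  assume "c = - \<i>"
  have "bij (\<lambda>x. x - \<i> *\<^sub>C - S x)"
    unfolding bij_def using assms(1-3) complex_vector.linear_compose_neg[OF assms(1)]
      hermitian_inj_id_minus_i[of "\<lambda>x. - S x"] hermitian_surj_id_minus_i[of "\<lambda>x. - S x" K]
    by (simp add: cinner_minus_left cinner_minus_right)
  then show ?thesis
    using \<open>c = - \<i>\<close> by (simp add: complex_vector.scale_minus_left complex_vector.scale_minus_right)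
qed

lemma self_adjoint_inverse_hermitian:
  assumes "self_adjoint_op D T" and "is_inverse_op D T S"
  shows "cinner (S u) v = cinner u (S v)"
proof -
  have S_in: "\<And>x. S x \<in> D" and T_S: "\<And>x. T (S x) = x"
    using assms(2) by (simp_all add: is_inverse_op_def)
  have T_sym: "\<And>x y. x \<in> D \<Longrightarrow> y \<in> D \<Longrightarrow> cinner (T x) y = cinner x (T y)"
    using assms(1) by (simp add: self_adjoint_op_def)
  have "cinner (S u) v = cinner (S u) (T (S v))"
    by (simp only: T_S)
  also have "\<dots> = cinner (T (S u)) (S v)"
    by (rule T_sym[OF S_in S_in, symmetric])
  also have "\<dots> = cinner u (S v)"
    by (simp only: T_S)
  finally show ?thesis .
qed

lemma inverse_of_extension_cinner:
  assumes "self_adjoint_op D T" and "extends_op D T D0 T0" and "is_inverse_op D T S"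
    and "x \<in> D0"
  shows "cinner (T0 x) (S z) = cinner x z"
proof -
  have "x \<in> D" and "T x = T0 x"
    using assms(2,4) by (auto simp: extends_op_def)
  moreover have "S z \<in> D" and "T (S z) = z"
    using assms(3) by (simp_all add: is_inverse_op_def)
  ultimately show ?thesis
    using assms(1) by (metis self_adjoint_op_def)
qed

lemma orth_range_shift_iff:
  assumes "\<And>x z. x \<in> D0 \<Longrightarrow> cinner (T0 x) (S z) = cinner x z"
  shows "z - c *\<^sub>C S z \<in> orth (T0 ` D0) \<longleftrightarrow> z \<in> orth ((\<lambda>x. T0 x - cnj c *\<^sub>C x) ` D0)"
  by (simp add: orth_def assms cinner_diff_left cinner_diff_right cinner_scaleC_left cinner_scaleC_right)

lemma image_orth_range_shift:
  assumes "clinear S" and "\<And>x. norm (S x) \<le> K * norm x"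
    and "\<And>u v. cinner (S u) v = cinner u (S v)"
    and "\<And>x z. x \<in> D0 \<Longrightarrow> cinner (T0 x) (S z) = cinner x z"
    and "c = \<i> \<or> c = - \<i>"
  shows "(\<lambda>z. z - c *\<^sub>C S z) ` orth ((\<lambda>x. T0 x - cnj c *\<^sub>C x) ` D0) = orth (T0 ` D0)"
proof -
  have "orth ((\<lambda>x. T0 x - cnj c *\<^sub>C x) ` D0) = (\<lambda>z. z - c *\<^sub>C S z) -` orth (T0 ` D0)"
    using orth_range_shift_iff[OF assms(4)] by blast
  moreover have "surj (\<lambda>z. z - c *\<^sub>C S z)"
    using hermitian_bij_id_minus_scaleC[OF assms(1-3,5)] by (rule bij_is_surj)
  ultimately show ?thesis
    by (simp add: image_vimage_eq)
qed

theorem mainTheorem7: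
  fixes D0 D :: "'a::chilbert_space set"
    and T0 T Tinv :: "'a \<Rightarrow> 'a"
  assumes "lin_op D0 T0" and "densely_defined D0" and "closed_op D0 T0"
    and "symmetric_op D0 T0"
    and "self_adjoint_op D T" and "extends_op D T D0 T0"
    and "bounded_clinear Tinv" and "is_inverse_op D T Tinv"
  defines "X \<equiv> inv (\<lambda>x. x - \<i> *\<^sub>C Tinv x)"
  shows "bij_betw X (orth (T0 ` D0)) (orth ((\<lambda>x. T0 x + \<i> *\<^sub>C x) ` D0))
    \<and> cdim (orth (T0 ` D0)) = cdim (orth ((\<lambda>x. T0 x + \<i> *\<^sub>C x) ` D0))
    \<and> cdim (orth ((\<lambda>x. T0 x + \<i> *\<^sub>C x) ` D0)) = cdim (orth ((\<lambda>x. T0 x - \<i> *\<^sub>C x) ` D0))"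
proof -
  obtain K where lin: "clinear Tinv" and bound: "\<And>x. norm (Tinv x) \<le> K * norm x"
    using assms(7) by (auto simp: bounded_clinear_iff)
  have hermitian: "\<And>u v. cinner (Tinv u) v = cinner u (Tinv v)"
    using assms(5,8) by (rule self_adjoint_inverse_hermitian)
  have adjoint: "\<And>x z. x \<in> D0 \<Longrightarrow> cinner (T0 x) (Tinv z) = cinner x z"
    using assms(5,6,8) by (rule inverse_of_extension_cinner)
  let ?Y = "\<lambda>c z. z - c *\<^sub>C Tinv z"
  have image: "?Y c ` orth ((\<lambda>x. T0 x - cnj c *\<^sub>C x) ` D0) = orth (T0 ` D0)"
    if "c = \<i> \<or> c = - \<i>" for c
    using lin bound hermitian adjoint that by (rule image_orth_range_shift)
  have cdim_eq: "cdim (orth (T0 ` D0)) = cdim (orth ((\<lambda>x. T0 x - cnj c *\<^sub>C x) ` D0))"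
    if "c = \<i> \<or> c = - \<i>" for c
    unfolding image[OF that, symmetric] using clinear_id_minus_scaleC[OF lin]
      hermitian_bij_id_minus_scaleC[OF lin bound hermitian that] by (rule cdim_bij_image)
  have plus: "(\<lambda>x. T0 x - cnj \<i> *\<^sub>C x) = (\<lambda>x. T0 x + \<i> *\<^sub>C x)"
    and minus: "(\<lambda>x. T0 x - cnj (- \<i>) *\<^sub>C x) = (\<lambda>x. T0 x - \<i> *\<^sub>C x)"
    by (simp_all add: complex_vector.scale_minus_left)
  have "bij_betw X (orth (T0 ` D0)) (orth ((\<lambda>x. T0 x + \<i> *\<^sub>C x) ` D0))"
    unfolding X_def plus[symmetric]
    using hermitian_bij_id_minus_scaleC[OF lin bound hermitian, of \<i>] image[of \<i>]
    by (intro bij_betw_inv_into_subset) simp_all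
  then show ?thesis
    using cdim_eq[of \<i>] cdim_eq[of "- \<i>"] unfolding plus minus by simp
qed

end
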